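(* Let $N$ be a power of $2$ and let $U$ be an orthogonal $N\times N$ matrix. Then there exists a quantum query algorithm making $O(k\cdot 4^k)$ quantum queries to the input $z=(z^{(1)},\dots,z^{(k)})\in\{-1,1\}^{kN}$ that solves the $k$-fold Rorrelation problem with respect to $U$ with success probability at least $2/3$ (i.e., it accepts every YES instance with probability at least $2/3$ and accepts every NO instance with probability at most $1/3$).
   Context: The $k$-fold Rorrelation of $z^{(1)},\dots,z^{(k)}\in\mathbb R^N$ with respect to an orthogonal $N\times N$ matrix $U$ is $\phi_U(z^{(1)},\dots,z^{(k)})=\frac1N\sum_{i_1,\dots,i_k\in[N]} z^{(1)}_{i_1}U_{i_1,i_2}z^{(2)}_{i_2}\cdots U_{i_{k-1},i_k}z^{(k)}_{i_k}$. The $k$-fold Rorrelation problem asks to distinguish YES instances $z\in\{-1,1\}^{kN}$ with $\phi_U(z)\ge 2^{-k}$ from NO instances with $|\phi_U(z)|\le\frac12\cdot 2^{-k}$. A quantum query to $z\in\{-1,1\}^{kN}$ applies the diagonal unitary $|i,w\rangle\mapsto z_i|i,w\rangle$, where $i\in[kN]$ and $w$ is an auxiliary workspace register; the algorithm may otherwise apply arbitrary unitaries independent of $z$. *)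

theory Defs
  imports Complex_Main "HOL-Library.FuncSet"
begin

text \<open>Real N x N matrices are functions nat => nat => real, only entries with
  indices < N matter (0-based indices).\<close>

definition orthogonal_mat :: "nat \<Rightarrow> (nat \<Rightarrow> nat \<Rightarrow> real) \<Rightarrow> bool" where
  "orthogonal_mat N U \<longleftrightarrow>
     (\<forall>i<N. \<forall>j<N. (\<Sum>l<N. U l i * U l j) = (if i = j then 1 else 0))"

text \<open>Input z in R^{kN}: block j (0-based, j < k) is z^{(j+1)}, with
  z^{(j+1)}_i = z (j*N + i) for i < N.\<close>

definition rorrelation :: "nat \<Rightarrow> nat \<Rightarrow> (nat \<Rightarrow> nat \<Rightarrow> real) \<Rightarrow> (nat \<Rightarrow> real) \<Rightarrow> real" where
  "rorrelation k N U z =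
     (1 / real N) * (\<Sum>\<iota> \<in> {..<k} \<rightarrow>\<^sub>E {..<N}.
        (\<Prod>j<k. z (j * N + \<iota> j)) * (\<Prod>j<k - 1. U (\<iota> j) (\<iota> (Suc j))))"

text \<open>The Hilbert space is C^D with D = K * W, where
  K = kN is the size of the query register and W \<ge> 1 the workspace dimension;
  basis state x < D encodes |i,w> with i = x mod K, w = x div K.\<close>

definition unitary_op :: "nat \<Rightarrow> (nat \<Rightarrow> nat \<Rightarrow> complex) \<Rightarrow> bool" where
  "unitary_op D M \<longleftrightarrow>
     (\<forall>y<D. \<forall>y'<D. (\<Sum>x<D. cnj (M x y) * M x y') = (if y = y' then 1 else 0))"

definition apply_op :: "nat \<Rightarrow> (nat \<Rightarrow> nat \<Rightarrow> complex) \<Rightarrow> (nat \<Rightarrow> complex) \<Rightarrow> (nat \<Rightarrow> complex)" where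
  "apply_op D M v = (\<lambda>x. if x < D then (\<Sum>y<D. M x y * v y) else 0)"

definition query_op :: "nat \<Rightarrow> (nat \<Rightarrow> real) \<Rightarrow> (nat \<Rightarrow> complex) \<Rightarrow> (nat \<Rightarrow> complex)" where
  "query_op K z v = (\<lambda>x. complex_of_real (z (x mod K)) * v x)"

text \<open>After the initial unitary, each further unitary V is preceded by one query.\<close>
fun run_alg :: "nat \<Rightarrow> nat \<Rightarrow> (nat \<Rightarrow> real) \<Rightarrow> (nat \<Rightarrow> nat \<Rightarrow> complex) list
                  \<Rightarrow> (nat \<Rightarrow> complex) \<Rightarrow> (nat \<Rightarrow> complex)" where
  "run_alg D K z [] v = v"
| "run_alg D K z (V # Vs) v = run_alg D K z Vs (apply_op D V (query_op K z v))"

definition query_algorithm ::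
  "nat \<Rightarrow> nat \<Rightarrow> (nat \<Rightarrow> nat \<Rightarrow> complex) \<Rightarrow> (nat \<Rightarrow> nat \<Rightarrow> complex) list \<Rightarrow> nat set \<Rightarrow> bool" where
  "query_algorithm K W V0 Vs A \<longleftrightarrow> W \<ge> 1 \<and> unitary_op (K * W) V0
      \<and> (\<forall>V \<in> set Vs. unitary_op (K * W) V) \<and> A \<subseteq> {..<K * W}"

text \<open>Number of queries made = length Vs.\<close>

definition final_state ::
  "nat \<Rightarrow> nat \<Rightarrow> (nat \<Rightarrow> nat \<Rightarrow> complex) \<Rightarrow> (nat \<Rightarrow> nat \<Rightarrow> complex) list \<Rightarrow> (nat \<Rightarrow> real) \<Rightarrow> nat \<Rightarrow> complex" where
  "final_state K W V0 Vs z =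
     run_alg (K * W) K z Vs (apply_op (K * W) V0 (\<lambda>x. if x = 0 then 1 else 0))"

definition accept_prob ::
  "nat \<Rightarrow> nat \<Rightarrow> (nat \<Rightarrow> nat \<Rightarrow> complex) \<Rightarrow> (nat \<Rightarrow> nat \<Rightarrow> complex) list \<Rightarrow> nat set \<Rightarrow> (nat \<Rightarrow> real) \<Rightarrow> real" where
  "accept_prob K W V0 Vs A z = (\<Sum>x\<in>A. (cmod (final_state K W V0 Vs z x))\<^sup>2)"

end

theory Submission
  imports Defs
begin

text \<open>Each of \<open>m = 5 * 4 ^ (k - 1)\<close> trials spends \<open>k\<close> queries. Starting from the uniform unit
  vector \<open>u\<close>, alternately querying a block (which multiplies by \<open>diag z\<^sub>j\<close>) and applying \<open>U\<close>
  leaves \<open>y = diag z\<^sub>1 U diag z\<^sub>2 \<dots> U diag z\<^sub>k u\<close> in the query register; \<open>y\<close> is a unit vector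
  and \<open>\<langle>u, y\<rangle>\<close> is the rorrelation \<open>\<phi>\<close>. The Householder reflection exchanging \<open>e\<^sub>0\<close> and \<open>u\<close>
  turns \<open>y\<close> into a unit vector with amplitude \<open>\<phi>\<close> at \<open>0\<close>, which is then moved into a fresh
  base-\<open>N\<close> digit of the workspace. Accepting iff some digit is \<open>0\<close> happens with probability
  \<open>1 - (1 - \<phi>\<^sup>2) ^ m\<close>: at least \<open>1 - exp (- 5 / 4) > 2 / 3\<close> if \<open>\<phi> \<ge> 2 ^ - k\<close>, and at most
  \<open>m \<phi>\<^sup>2 \<le> 5 / 16\<close> if \<open>\<bar>\<phi>\<bar> \<le> 2 ^ - k / 2\<close>.\<close>

section \<open>Mixed-radix indices and digits\<close>

lemma sum_lessThan_mult:
  fixes f :: "nat \<Rightarrow> 'a::comm_monoid_add"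
  shows "(\<Sum>x<N * R. f x) = (\<Sum>r<R. \<Sum>a<N. f (a + N * r))"
proof -
  have "(\<Sum>x<N * R. f x) = (\<Sum>r<R. sum f {r * N..<r * N + N})"
    using sum.nat_group[of f N R] by (simp add: mult.commute)
  also have "\<dots> = (\<Sum>r<R. \<Sum>a<N. f (a + N * r))"
  proof (rule sum.cong[OF refl])
    fix r
    have "sum f {0 + r * N..<N + r * N} = sum (\<lambda>a. f (a + r * N)) {0..<N}"
      by (rule sum.shift_bounds_nat_ivl)
    then show "sum f {r * N..<r * N + N} = (\<Sum>a<N. f (a + N * r))"
      by (simp add: add.commute mult.commute atLeast0LessThan)
  qed
  finally show ?thesis .
qed

lemma prod_lessThan_if_zero:
  "(\<Prod>t<(m::nat). if P t then f t else (0::'a::comm_semiring_1)) =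
     (if \<forall>t<m. P t then \<Prod>t<m. f t else 0)"
  by (induction m) (auto simp: less_Suc_eq)

lemma add_mult_less_mult:
  assumes "a < (N::nat)" "q < R"
  shows "a + N * q < N * R"
proof -
  have "a + N * q < N * Suc q" using assms(1) by simp
  also have "\<dots> \<le> N * R" using assms(2) by (intro mult_le_mono2) simp
  finally show ?thesis .
qed

lemma mixed_radix_less: "a < N \<Longrightarrow> j < k \<Longrightarrow> w < W \<Longrightarrow> a + N * (j + k * w) < N * (k * (W::nat))"
  by (intro add_mult_less_mult) auto

lemma mixed_radix_add_mult:
  assumes "a < (N::nat)" "j < k"
  shows "(a + N * (j + k * w)) mod N = a" "(a + N * (j + k * w)) div N mod k = j"
    and "(a + N * (j + k * w)) div N div k = w"
  using assms by auto

lemma mixed_radix_decompose: "(x::nat) = x mod N + N * (x div N mod k + k * (x div N div k))"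
  by simp

lemma mixed_radix_high_less: "x < N * (k * W) \<Longrightarrow> x div N div k < (W::nat)"
  by (metis div_less_iff_less_mult less_nat_zero_code mult_is_0 mult.commute neq0_conv)

lemma Suc_mod_eq_iff: "i < k \<Longrightarrow> j < k \<Longrightarrow> Suc i mod k = Suc j mod k \<longleftrightarrow> i = (j::nat)"
  by (auto simp: mod_Suc)

lemma sum_mixed_radix:
  fixes f :: "nat \<Rightarrow> 'a::comm_monoid_add"
  shows "(\<Sum>x<N * (k * W). f x) = (\<Sum>w<W. \<Sum>j<k. \<Sum>a<N. f (a + N * (j + k * w)))"
  by (simp only: sum_lessThan_mult[where f = f] sum_lessThan_mult[where N = k])

definition digit :: "nat \<Rightarrow> nat \<Rightarrow> nat \<Rightarrow> nat" where
  "digit N t w = w div N ^ t mod N"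

lemma digit_0_add_mult: "a < N \<Longrightarrow> digit N 0 (a + N * w) = a"
  by (simp add: digit_def)

lemma digit_Suc: "digit N (Suc t) w = digit N t (w div N)"
  by (simp add: digit_def div_mult2_eq)

lemma digit_Suc_add_mult: "a < N \<Longrightarrow> digit N (Suc t) (a + N * w) = digit N t w"
  by (simp add: digit_Suc)

lemma digit_mod_power:
  assumes "0 < N" "t < p"
  shows "digit N t (w mod N ^ p) = digit N t w"
proof -
  have "N ^ p = N ^ t * (N * N ^ (p - Suc t))"
    using assms(2) by (simp flip: power_Suc power_add)
  then have "w mod N ^ p div N ^ t = w div N ^ t mod (N * N ^ (p - Suc t))"
    using assms(1) by (simp add: mod_mult2_eq)
  then show ?thesis unfolding digit_def by (simp add: mod_mult2_eq)
qed

lemma digit_last: "w < N ^ Suc p \<Longrightarrow> digit N p w = w div N ^ p"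
  by (simp add: digit_def less_mult_imp_div_less)

lemma digits_eq_0_imp_eq_0:
  assumes "0 < N" "w < N ^ m" "\<forall>t<m. digit N t w = 0"
  shows "w = 0"
  using assms(2,3)
proof (induction m arbitrary: w)
  case (Suc m)
  have "w div N < N ^ m"
    using Suc.prems(1) assms(1) by (simp add: div_less_iff_less_mult mult.commute)
  moreover have "\<forall>t<m. digit N t (w div N) = 0"
    using Suc.prems(2) by (auto simp flip: digit_Suc)
  ultimately have "w div N = 0" by (rule Suc.IH)
  moreover have "w mod N = 0"
    using Suc.prems(2) by (auto simp: digit_def)
  ultimately show ?case by (metis div_mult_mod_eq mult_0 add_0)
qed simp

lemma sum_prod_digits:
  "(\<Sum>w<N ^ m. \<Prod>t<m. h t (digit N t w)) = (\<Prod>t<m. \<Sum>a<N. h t a :: 'a::comm_semiring_1)"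
proof (induction m arbitrary: h)
  case (Suc m)
  have "(\<Sum>w<N ^ Suc m. \<Prod>t<Suc m. h t (digit N t w))
      = (\<Sum>w<N ^ m. \<Sum>a<N. \<Prod>t<Suc m. h t (digit N t (a + N * w)))"
    unfolding power_Suc by (rule sum_lessThan_mult[where f = "\<lambda>w. \<Prod>t<Suc m. h t (digit N t w)"])
  also have "\<dots> = (\<Sum>w<N ^ m. \<Sum>a<N. h 0 a * (\<Prod>t<m. h (Suc t) (digit N t w)))"
    by (intro sum.cong refl)
       (simp only: lessThan_iff prod.lessThan_Suc_shift digit_0_add_mult digit_Suc_add_mult)
  also have "\<dots> = (\<Sum>a<N. h 0 a) * (\<Sum>w<N ^ m. \<Prod>t<m. h (Suc t) (digit N t w))"
    unfolding sum_product by (rule sum.swap)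
  also have "\<dots> = (\<Prod>t<Suc m. \<Sum>a<N. h t a)"
    by (simp only: Suc.IH[of "\<lambda>t. h (Suc t)"] prod.lessThan_Suc_shift)
  finally show ?case .
qed simp

lemma sum_some_digit_zero:
  assumes "0 < N" and "(\<Sum>a<N. g a) = (1::real)"
  shows "(\<Sum>w<N ^ m. if \<exists>t<m. digit N t w = 0 then \<Prod>t<m. g (digit N t w) else 0) = 1 - (1 - g 0) ^ m"
proof -
  have "(\<Sum>w<N ^ m. if \<exists>t<m. digit N t w = 0 then \<Prod>t<m. g (digit N t w) else 0)
      = (\<Sum>w<N ^ m. (\<Prod>t<m. g (digit N t w)) - (\<Prod>t<m. if digit N t w \<noteq> 0 then g (digit N t w) else 0))"
    by (intro sum.cong refl) (auto simp: prod_lessThan_if_zero)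
  also have "\<dots> = (\<Prod>t<m. \<Sum>a<N. g a) - (\<Prod>t<m. \<Sum>a<N. if a \<noteq> 0 then g a else 0)"
    by (simp only: sum_subtractf sum_prod_digits[where h = "\<lambda>_. g"]
        sum_prod_digits[where h = "\<lambda>_ a. if a \<noteq> 0 then g a else 0"])
  also have "(\<Sum>a<N. if a \<noteq> 0 then g a else 0) = (\<Sum>a<N. g a - (if a = 0 then g a else 0))"
    by (intro sum.cong) auto
  also have "\<dots> = (\<Sum>a<N. g a) - g 0"
    using assms(1) by (simp add: sum_subtractf)
  finally show ?thesis using assms(2) by simp
qed

section \<open>Operators\<close>

definition mult_op :: "nat \<Rightarrow> (nat \<Rightarrow> nat \<Rightarrow> complex) \<Rightarrow> (nat \<Rightarrow> nat \<Rightarrow> complex) \<Rightarrow> nat \<Rightarrow> nat \<Rightarrow> complex"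
  where "mult_op D A B = (\<lambda>x y. \<Sum>l<D. A x l * B l y)"

lemma apply_op_mult_op: "apply_op D (mult_op D A B) v = apply_op D A (apply_op D B v)"
proof (rule ext)
  fix x
  have "(\<Sum>y<D. (\<Sum>l<D. A x l * B l y) * v y) = (\<Sum>y<D. \<Sum>l<D. A x l * (B l y * v y))"
    by (simp add: sum_distrib_right mult.assoc)
  also have "\<dots> = (\<Sum>l<D. A x l * (\<Sum>y<D. B l y * v y))"
    by (subst sum.swap) (simp add: sum_distrib_left)
  finally show "apply_op D (mult_op D A B) v x = apply_op D A (apply_op D B v) x"
    by (simp add: apply_op_def mult_op_def)
qed

lemma unitary_op_mult_op:
  assumes A: "unitary_op D A" and B: "unitary_op D B"
  shows "unitary_op D (mult_op D A B)"
  unfolding unitary_op_def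
proof (intro allI impI)
  fix y y' assume y: "y < D" and y': "y' < D"
  have "(\<Sum>x<D. cnj (mult_op D A B x y) * mult_op D A B x y')
      = (\<Sum>x<D. \<Sum>l<D. \<Sum>l'<D. cnj (B l y) * B l' y' * (cnj (A x l) * A x l'))"
    by (simp add: mult_op_def sum_distrib_left sum_distrib_right mult_ac)
  also have "\<dots> = (\<Sum>l<D. \<Sum>l'<D. \<Sum>x<D. cnj (B l y) * B l' y' * (cnj (A x l) * A x l'))"
    by (subst sum.swap, subst (2) sum.swap, rule refl)
  also have "\<dots> = (\<Sum>l<D. \<Sum>l'<D. cnj (B l y) * B l' y' * (if l = l' then 1 else 0))"
    using A unfolding unitary_op_def by (simp flip: sum_distrib_left)
  also have "\<dots> = (\<Sum>l<D. cnj (B l y) * B l y')"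
    by (simp add: if_distrib cong: if_cong)
  also have "\<dots> = (if y = y' then 1 else 0)"
    using B y y' by (simp add: unitary_op_def)
  finally show "(\<Sum>x<D. cnj (mult_op D A B x y) * mult_op D A B x y') = (if y = y' then 1 else 0)" .
qed

definition perm_op :: "(nat \<Rightarrow> nat) \<Rightarrow> nat \<Rightarrow> nat \<Rightarrow> complex"
  where "perm_op \<rho> = (\<lambda>x y. if y = \<rho> x then 1 else 0)"

lemma unitary_op_perm_op:
  assumes maps: "\<forall>x<D. \<rho> x < D" and inj: "inj_on \<rho> {..<D}"
  shows "unitary_op D (perm_op \<rho>)"
  unfolding unitary_op_def
proof (intro allI impI)
  fix y y' assume y: "y < D"
  have "\<rho> ` {..<D} = {..<D}"
    using maps inj by (intro endo_inj_surj) auto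
  then obtain x0 where x0: "x0 < D" "\<rho> x0 = y"
    using y by (metis imageE lessThan_iff)
  have "{x \<in> {..<D}. \<rho> x = y} = {x0}"
    using x0 inj by (auto simp: inj_on_def)
  moreover have "(\<Sum>x<D. cnj (perm_op \<rho> x y) * perm_op \<rho> x y')
      = (\<Sum>x\<in>{x \<in> {..<D}. \<rho> x = y}. if y = y' then 1 else 0)"
    by (rule sum.mono_neutral_cong_right) (auto simp: perm_op_def)
  ultimately show "(\<Sum>x<D. cnj (perm_op \<rho> x y) * perm_op \<rho> x y') = (if y = y' then 1 else 0)"
    by simp
qed

lemma apply_op_perm_op:
  assumes "\<forall>x<D. \<rho> x < D"
  shows "apply_op D (perm_op \<rho>) v = (\<lambda>x. if x < D then v (\<rho> x) else 0)"
proof (rule ext)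
  fix x
  have "(\<Sum>y<D. perm_op \<rho> x y * v y) = (\<Sum>y<D. if y = \<rho> x then v y else 0)"
    by (rule sum.cong) (auto simp: perm_op_def)
  then have "x < D \<Longrightarrow> (\<Sum>y<D. perm_op \<rho> x y * v y) = v (\<rho> x)"
    using assms by (simp add: sum.delta')
  then show "apply_op D (perm_op \<rho>) v x = (if x < D then v (\<rho> x) else 0)"
    by (simp add: apply_op_def)
qed

definition block_diag_op :: "nat \<Rightarrow> (nat \<Rightarrow> nat \<Rightarrow> complex) \<Rightarrow> nat \<Rightarrow> nat \<Rightarrow> complex"
  where "block_diag_op N A = (\<lambda>x y. if x div N = y div N then A (x mod N) (y mod N) else 0)"

lemma block_diag_op_add_mult:
  assumes "a < N"
  shows "block_diag_op N A (a + N * r) y = (if r = y div N then A a (y mod N) else 0)"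
    and "block_diag_op N A x (a + N * r) = (if r = x div N then A (x mod N) a else 0)"
  using assms by (auto simp: block_diag_op_def)

lemma unitary_op_block_diag_op:
  assumes N: "0 < N" and A: "unitary_op N A"
  shows "unitary_op (N * R) (block_diag_op N A)"
  unfolding unitary_op_def
proof (intro allI impI)
  fix y y' assume y: "y < N * R" and y': "y' < N * R"
  have yR: "y div N < R" using y N by (simp add: div_less_iff_less_mult mult.commute)
  have "(\<Sum>x<N * R. cnj (block_diag_op N A x y) * block_diag_op N A x y')
      = (\<Sum>r<R. \<Sum>a<N. cnj (block_diag_op N A (a + N * r) y) * block_diag_op N A (a + N * r) y')"
    by (rule sum_lessThan_mult)
  also have "\<dots> = (\<Sum>r<R. if r = y div N \<and> r = y' div N
                      then \<Sum>a<N. cnj (A a (y mod N)) * A a (y' mod N) else 0)"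
  proof (intro sum.cong refl)
    fix r
    have "(\<Sum>a<N. cnj (block_diag_op N A (a + N * r) y) * block_diag_op N A (a + N * r) y')
        = (\<Sum>a<N. if r = y div N \<and> r = y' div N then cnj (A a (y mod N)) * A a (y' mod N) else 0)"
      by (intro sum.cong refl) (simp add: block_diag_op_add_mult)
    then show "(\<Sum>a<N. cnj (block_diag_op N A (a + N * r) y) * block_diag_op N A (a + N * r) y')
        = (if r = y div N \<and> r = y' div N then \<Sum>a<N. cnj (A a (y mod N)) * A a (y' mod N) else 0)"
      by (cases "r = y div N \<and> r = y' div N") auto
  qed
  also have "\<dots> = (if y div N = y' div N then \<Sum>a<N. cnj (A a (y mod N)) * A a (y' mod N) else 0)"
  proof (cases "y div N = y' div N")
    case True
    then show ?thesis using yR by (simp add: sum.delta')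
  qed (auto intro!: sum.neutral)
  also have "\<dots> = (if y = y' then 1 else 0)"
  proof (cases "y div N = y' div N")
    case True
    then have "y = y' \<longleftrightarrow> y mod N = y' mod N" by (metis div_mult_mod_eq)
    then show ?thesis using A N True by (simp add: unitary_op_def)
  qed auto
  finally show "(\<Sum>x<N * R. cnj (block_diag_op N A x y) * block_diag_op N A x y') = (if y = y' then 1 else 0)" .
qed

lemma apply_op_block_diag_op:
  assumes N: "0 < N" and x: "x < N * R"
  shows "apply_op (N * R) (block_diag_op N A) v x = (\<Sum>b<N. A (x mod N) b * v (b + N * (x div N)))"
proof -
  have xR: "x div N < R" using x N by (simp add: div_less_iff_less_mult mult.commute)
  have "(\<Sum>y<N * R. block_diag_op N A x y * v y)
      = (\<Sum>r<R. \<Sum>b<N. block_diag_op N A x (b + N * r) * v (b + N * r))"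
    by (rule sum_lessThan_mult[where f = "\<lambda>y. block_diag_op N A x y * v y"])
  also have "\<dots> = (\<Sum>r<R. if r = x div N then \<Sum>b<N. A (x mod N) b * v (b + N * r) else 0)"
  proof (intro sum.cong refl)
    fix r
    have "(\<Sum>b<N. block_diag_op N A x (b + N * r) * v (b + N * r))
        = (\<Sum>b<N. if r = x div N then A (x mod N) b * v (b + N * r) else 0)"
      by (intro sum.cong refl) (simp add: block_diag_op_add_mult)
    then show "(\<Sum>b<N. block_diag_op N A x (b + N * r) * v (b + N * r))
        = (if r = x div N then \<Sum>b<N. A (x mod N) b * v (b + N * r) else 0)"
      by (cases "r = x div N") simp_all
  qed
  also have "\<dots> = (\<Sum>b<N. A (x mod N) b * v (b + N * (x div N)))"
    using xR by (simp add: sum.delta')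
  finally show ?thesis using x by (simp add: apply_op_def)
qed

lemma unitary_op_of_orthogonal_mat:
  "orthogonal_mat N A \<Longrightarrow> unitary_op N (\<lambda>a b. complex_of_real (A a b))"
  unfolding orthogonal_mat_def unitary_op_def by (simp flip: of_real_mult of_real_sum)

lemma run_alg_append: "run_alg D K z (xs @ ys) v = run_alg D K z ys (run_alg D K z xs v)"
  by (induction xs arbitrary: v) auto

definition ket0 :: "nat \<Rightarrow> complex" where
  "ket0 a = (if a = 0 then 1 else 0)"

lemma sum_mult_ket0:
  assumes "0 < N"
  shows "(\<Sum>b<N. f b * ket0 b) = f 0"
proof -
  have "(\<Sum>b<N. f b * ket0 b) = (\<Sum>b<N. if b = 0 then f b else 0)"
    by (intro sum.cong) (auto simp: ket0_def)
  then show ?thesis using assms by simp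
qed

section \<open>Reflections and the rorrelation as an inner product\<close>

lemma orthogonal_mat_sum_squares:
  assumes "orthogonal_mat N A"
  shows "(\<Sum>a<N. (\<Sum>b<N. A a b * f b)\<^sup>2) = (\<Sum>b<N. (f b)\<^sup>2)"
proof -
  have "(\<Sum>a<N. (\<Sum>b<N. A a b * f b)\<^sup>2) = (\<Sum>a<N. \<Sum>b<N. \<Sum>b'<N. f b * f b' * (A a b * A a b'))"
    by (simp add: power2_eq_square sum_distrib_left sum_distrib_right mult_ac)
  also have "\<dots> = (\<Sum>b<N. \<Sum>b'<N. \<Sum>a<N. f b * f b' * (A a b * A a b'))"
    by (subst sum.swap, subst (2) sum.swap, rule refl)
  also have "\<dots> = (\<Sum>b<N. \<Sum>b'<N. f b * f b' * (if b = b' then 1 else 0))"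
    using assms unfolding orthogonal_mat_def by (simp flip: sum_distrib_left)
  also have "\<dots> = (\<Sum>b<N. (f b)\<^sup>2)"
    by (simp add: if_distrib power2_eq_square cong: if_cong)
  finally show ?thesis .
qed

text \<open>Householder reflection along \<open>v\<close>; for \<open>v = 0\<close> the division yields \<open>0\<close> and it is the identity.\<close>
definition reflection :: "nat \<Rightarrow> (nat \<Rightarrow> real) \<Rightarrow> nat \<Rightarrow> nat \<Rightarrow> real" where
  "reflection N v a b = (if a = b then 1 else 0) - 2 / (\<Sum>c<N. (v c)\<^sup>2) * (v a * v b)"

lemma reflection_sym: "reflection N v a b = reflection N v b a"
  by (simp add: reflection_def mult.commute eq_commute)

lemma orthogonal_mat_reflection: "orthogonal_mat N (reflection N v)"
  unfolding orthogonal_mat_def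
proof (intro allI impI)
  fix i j assume i: "i < N" and j: "j < N"
  define s where "s = (\<Sum>c<N. (v c)\<^sup>2)"
  define c where "c = 2 / s"
  define \<delta> where "\<delta> = (\<lambda>a b::nat. if a = b then (1::real) else 0)"
  have "\<And>l. reflection N v l i * reflection N v l j
      = \<delta> l i * \<delta> l j - c * v j * (\<delta> l i * v l) - c * v i * (\<delta> l j * v l) + c * c * v i * v j * (v l)\<^sup>2"
    by (simp add: reflection_def c_def s_def \<delta>_def algebra_simps power2_eq_square)
  then have "(\<Sum>l<N. reflection N v l i * reflection N v l j)
      = (\<Sum>l<N. \<delta> l i * \<delta> l j) - c * v j * (\<Sum>l<N. \<delta> l i * v l) - c * v i * (\<Sum>l<N. \<delta> l j * v l)
        + c * c * v i * v j * (\<Sum>l<N. (v l)\<^sup>2)"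
    by (simp add: sum.distrib sum_subtractf sum_distrib_left)
  also have "\<dots> = \<delta> i j + (c * c * s - 2 * c) * (v i * v j)"
    using i j by (simp add: \<delta>_def s_def if_distrib[of "\<lambda>x. x * _"] sum.delta cong: if_cong)
      (simp add: algebra_simps)
  also have "c * c * s - 2 * c = 0"
    by (cases "s = 0") (simp_all add: c_def field_simps power2_eq_square)
  finally show "(\<Sum>l<N. reflection N v l i * reflection N v l j) = (if i = j then 1 else 0)"
    by (simp add: \<delta>_def)
qed

text \<open>The reflection along \<open>e\<^sub>0 - u\<close>, which exchanges \<open>e\<^sub>0\<close> and the uniform unit vector \<open>u\<close>.\<close>
definition uniform_reflection :: "nat \<Rightarrow> nat \<Rightarrow> nat \<Rightarrow> real" where
  "uniform_reflection N = reflection N (\<lambda>a. (if a = 0 then 1 else 0) - 1 / sqrt (real N))"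

lemma orthogonal_mat_uniform_reflection: "orthogonal_mat N (uniform_reflection N)"
  by (simp add: uniform_reflection_def orthogonal_mat_reflection)

lemma uniform_reflection_sym: "uniform_reflection N a b = uniform_reflection N b a"
  by (simp add: uniform_reflection_def reflection_sym)

lemma uniform_reflection_col_0:
  assumes N: "0 < N" and a: "a < N"
  shows "uniform_reflection N a 0 = 1 / sqrt (real N)"
proof -
  define v where "v = (\<lambda>a::nat. (if a = 0 then 1 else 0) - 1 / sqrt (real N))"
  have sN: "sqrt (real N) * sqrt (real N) = real N" using N by simp
  have "\<And>c. (v c)\<^sup>2 = (if c = 0 then 1 - 2 / sqrt (real N) else 0) + 1 / real N"
    using N sN by (auto simp: v_def power2_eq_square field_simps)
  then have "(\<Sum>c<N. (v c)\<^sup>2) = 1 - 2 / sqrt (real N) + real N * (1 / real N)"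
    using N by (simp add: sum.distrib)
  also have "\<dots> = 2 * v 0"
    using N by (simp add: v_def)
  finally have norm: "(\<Sum>c<N. (v c)\<^sup>2) = 2 * v 0" .
  show ?thesis
  proof (cases "v 0 = 0")
    case True
    then have "N = 1" by (simp add: v_def)
    then show ?thesis using a True by (simp add: uniform_reflection_def reflection_def)
  next
    case False
    then show ?thesis
      by (simp add: uniform_reflection_def reflection_def norm flip: v_def) (simp add: v_def)
  qed
qed

definition cons_index :: "nat \<Rightarrow> nat \<Rightarrow> (nat \<Rightarrow> nat) \<Rightarrow> nat \<Rightarrow> nat" where
  "cons_index L a g = (\<lambda>j. if j = 0 then a else if j < Suc L then g (j - 1) else undefined)"

lemma cons_index_0 [simp]: "cons_index L a g 0 = a"
  by (simp add: cons_index_def)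

lemma cons_index_Suc [simp]: "j < L \<Longrightarrow> cons_index L a g (Suc j) = g j"
  by (simp add: cons_index_def)

lemma prod_blocks_cons_index:
  "(\<Prod>j<Suc L. z (j * N + cons_index L a g j)) = z a * (\<Prod>j<L. z (j * N + g j + N))"
  unfolding prod.lessThan_Suc_shift by (simp add: cons_index_def add_ac)

lemma sum_PiE_lessThan_Suc:
  "(\<Sum>\<iota>\<in>{..<Suc L} \<rightarrow>\<^sub>E {..<N}. f \<iota>) = (\<Sum>a<N. \<Sum>g\<in>{..<L} \<rightarrow>\<^sub>E {..<N}. f (cons_index L a g))"
proof -
  have "(\<Sum>a<N. \<Sum>g\<in>{..<L} \<rightarrow>\<^sub>E {..<N}. f (cons_index L a g))
      = (\<Sum>(a, g)\<in>{..<N} \<times> ({..<L} \<rightarrow>\<^sub>E {..<N}). f (cons_index L a g))"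
    by (simp add: sum.cartesian_product)
  also have "\<dots> = (\<Sum>\<iota>\<in>{..<Suc L} \<rightarrow>\<^sub>E {..<N}. f \<iota>)"
    by (rule sum.reindex_bij_witness[where i = "\<lambda>\<iota>. (\<iota> 0, \<lambda>t. if t < L then \<iota> (Suc t) else undefined)"
          and j = "\<lambda>(a, g). cons_index L a g"])
       (auto simp: cons_index_def PiE_def extensional_def Pi_def fun_eq_iff)
  finally show ?thesis by simp
qed

text \<open>\<open>chain_vector N U L z = U diag z\<^sub>1 U diag z\<^sub>2 \<dots> U diag z\<^sub>L u\<close>, where \<open>z\<^sub>j\<close> is the
  \<open>j\<close>-th block of length \<open>N\<close> of \<open>z\<close> and \<open>u\<close> the uniform unit vector.\<close>
fun chain_vector :: "nat \<Rightarrow> (nat \<Rightarrow> nat \<Rightarrow> real) \<Rightarrow> nat \<Rightarrow> (nat \<Rightarrow> real) \<Rightarrow> nat \<Rightarrow> real" where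
  "chain_vector N U 0 z = (\<lambda>a. 1 / sqrt (real N))"
| "chain_vector N U (Suc L) z = (\<lambda>a. \<Sum>b<N. U a b * (z b * chain_vector N U L (\<lambda>i. z (i + N)) b))"

lemma chain_vector_eq_sum:
  "chain_vector N U L z a = 1 / sqrt (real N) * (\<Sum>g\<in>{..<L} \<rightarrow>\<^sub>E {..<N}.
      (\<Prod>j<L. z (j * N + g j)) * (\<Prod>j<L. U (cons_index L a g j) (cons_index L a g (Suc j))))"
proof (induction L arbitrary: z a)
  case (Suc L)
  define z' where "z' = (\<lambda>i. z (i + N))"
  have z: "(\<Prod>j<Suc L. z (j * N + cons_index L b g j)) = z b * (\<Prod>j<L. z' (j * N + g j))" for b g
    by (simp only: prod_blocks_cons_index z'_def)
  have U: "(\<Prod>j<Suc L. U (cons_index (Suc L) a (cons_index L b g) j) (cons_index (Suc L) a (cons_index L b g) (Suc j)))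
      = U a b * (\<Prod>j<L. U (cons_index L b g j) (cons_index L b g (Suc j)))" for b g
  proof -
    have "(\<Prod>j<L. U (cons_index (Suc L) a (cons_index L b g) (Suc j)) (cons_index (Suc L) a (cons_index L b g) (Suc (Suc j))))
        = (\<Prod>j<L. U (cons_index L b g j) (cons_index L b g (Suc j)))"
      by (intro prod.cong refl) simp
    then show ?thesis unfolding prod.lessThan_Suc_shift by simp
  qed
  have "chain_vector N U (Suc L) z a = (\<Sum>b<N. U a b * (z b * chain_vector N U L z' b))"
    by (simp add: z'_def)
  also have "\<dots> = (\<Sum>b<N. \<Sum>g\<in>{..<L} \<rightarrow>\<^sub>E {..<N}. 1 / sqrt (real N) *
      ((\<Prod>j<Suc L. z (j * N + cons_index L b g j)) *
       (\<Prod>j<Suc L. U (cons_index (Suc L) a (cons_index L b g) j) (cons_index (Suc L) a (cons_index L b g) (Suc j)))))"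
    unfolding z U Suc.IH by (simp add: sum_distrib_left mult_ac)
  also have "\<dots> = 1 / sqrt (real N) * (\<Sum>g\<in>{..<Suc L} \<rightarrow>\<^sub>E {..<N}.
      (\<Prod>j<Suc L. z (j * N + g j)) * (\<Prod>j<Suc L. U (cons_index (Suc L) a g j) (cons_index (Suc L) a g (Suc j))))"
    by (simp add: sum_PiE_lessThan_Suc sum_distrib_left)
  finally show ?case .
qed simp

lemma rorrelation_Suc:
  assumes N: "0 < N"
  shows "rorrelation (Suc L) N U z = (\<Sum>a<N. 1 / sqrt (real N) * (z a * chain_vector N U L (\<lambda>i. z (i + N)) a))"
proof -
  define z' where "z' = (\<lambda>i. z (i + N))"
  have z: "(\<Prod>j<Suc L. z (j * N + cons_index L a g j)) = z a * (\<Prod>j<L. z' (j * N + g j))" for a g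
    by (simp only: prod_blocks_cons_index z'_def)
  have "rorrelation (Suc L) N U z = 1 / real N * (\<Sum>a<N. \<Sum>g\<in>{..<L} \<rightarrow>\<^sub>E {..<N}.
      (\<Prod>j<Suc L. z (j * N + cons_index L a g j)) * (\<Prod>j<L. U (cons_index L a g j) (cons_index L a g (Suc j))))"
    by (simp add: rorrelation_def sum_PiE_lessThan_Suc)
  also have "\<dots> = (\<Sum>a<N. sqrt (real N) / real N * (z a * chain_vector N U L z' a))"
    using N unfolding z chain_vector_eq_sum by (simp add: sum_distrib_left mult_ac)
  also have "sqrt (real N) / real N = 1 / sqrt (real N)"
    using N by (simp add: divide_simps)
  finally show ?thesis by (simp add: z'_def)
qed

lemma sum_squares_chain_vector:
  assumes N: "0 < N" and U: "orthogonal_mat N U" and z: "\<forall>i < L * N. z i \<in> {-1, 1}"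
  shows "(\<Sum>a<N. (chain_vector N U L z a)\<^sup>2) = 1"
  using z
proof (induction L arbitrary: z)
  case (Suc L)
  define z' where "z' = (\<lambda>i. z (i + N))"
  have "(\<Sum>a<N. (chain_vector N U (Suc L) z a)\<^sup>2) = (\<Sum>b<N. (z b * chain_vector N U L z' b)\<^sup>2)"
    unfolding chain_vector.simps z'_def by (rule orthogonal_mat_sum_squares[OF U])
  also have "\<dots> = (\<Sum>b<N. (chain_vector N U L z' b)\<^sup>2)"
  proof (intro sum.cong refl)
    fix b assume "b \<in> {..<N}"
    then have "b < Suc L * N" by simp
    then have "(z b)\<^sup>2 = 1" using Suc.prems by auto
    then show "(z b * chain_vector N U L z' b)\<^sup>2 = (chain_vector N U L z' b)\<^sup>2"
      by (simp add: power_mult_distrib)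
  qed
  also have "\<dots> = 1"
    using Suc.prems by (intro Suc.IH) (auto simp: z'_def)
  finally show ?case .
qed (use N in \<open>simp add: power_divide\<close>)

section \<open>Product states\<close>

text \<open>The basis index
  \<open>a + N * (j + k * w)\<close> (\<open>a < N\<close>, \<open>j < k\<close>, \<open>w < N ^ m\<close>) is the query register pointing at
  position \<open>a\<close> of block \<open>j\<close>, i.e. at \<open>z (a + N * j)\<close>, together with a workspace \<open>w\<close> read as
  \<open>m\<close> base-\<open>N\<close> digits, one per trial.\<close>
locale register_layout =
  fixes N k m :: nat
  assumes N_pos: "0 < N" and k_pos: "0 < k" and m_pos: "0 < m"
begin

abbreviation dim :: nat where "dim \<equiv> N * (k * N ^ m)"

definition shift_block :: "nat \<Rightarrow> nat" where
  "shift_block x = x mod N + N * (Suc (x div N mod k) mod k + k * (x div N div k))"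

lemma shift_block_less: "x < N * (k * W) \<Longrightarrow> shift_block x < N * (k * W)"
  unfolding shift_block_def using N_pos k_pos by (intro mixed_radix_less mixed_radix_high_less) auto

lemma shift_block_parts:
  "shift_block x mod N = x mod N" "shift_block x div N mod k = Suc (x div N mod k) mod k"
  "shift_block x div N div k = x div N div k"
  unfolding shift_block_def using N_pos k_pos by (simp_all add: mixed_radix_add_mult)

lemma inj_on_shift_block: "inj_on shift_block {..<N * (k * W)}"
proof (rule inj_onI)
  fix x y assume eq: "shift_block x = shift_block y"
  have "x div N mod k = y div N mod k"
    using shift_block_parts(2)[of x] shift_block_parts(2)[of y] eq k_pos by (simp add: Suc_mod_eq_iff)
  moreover have "x mod N = y mod N" "x div N div k = y div N div k"
    using shift_block_parts[of x] shift_block_parts[of y] eq by simp_all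
  ultimately show "x = y"
    using mixed_radix_decompose[of x N k] mixed_radix_decompose[of y N k] by metis
qed

text \<open>Under \<open>perm_op rotate_registers\<close> the query register receives the old digit \<open>0\<close>, digit \<open>t\<close>
  receives digit \<open>t + 1\<close>, and the top digit receives the old query register.\<close>
definition rotate_registers :: "nat \<Rightarrow> nat" where
  "rotate_registers x = x div N div k div N ^ (m - 1)
     + N * (x div N mod k + k * (x mod N + N * (x div N div k mod N ^ (m - 1))))"

lemma power_m: "N ^ m = N * N ^ (m - 1)"
  using m_pos by (simp flip: power_Suc)

lemma top_digit_less: "x < dim \<Longrightarrow> x div N div k div N ^ (m - 1) < N"
  using mixed_radix_high_less[of x N k "N ^ m"] power_m by (simp add: less_mult_imp_div_less)

lemma rotate_registers_less: "x < dim \<Longrightarrow> rotate_registers x < dim"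
proof -
  assume x: "x < dim"
  note top = top_digit_less[OF x]
  have "x mod N + N * (x div N div k mod N ^ (m - 1)) < N ^ m"
    unfolding power_m using N_pos by (intro add_mult_less_mult) auto
  then show ?thesis
    unfolding rotate_registers_def using top k_pos by (intro mixed_radix_less) auto
qed

lemma rotate_registers_parts:
  assumes "x < dim"
  shows "rotate_registers x mod N = x div N div k div N ^ (m - 1)"
    "rotate_registers x div N mod k = x div N mod k"
    "rotate_registers x div N div k = x mod N + N * (x div N div k mod N ^ (m - 1))"
  using mixed_radix_add_mult[OF top_digit_less[OF assms], of "x div N mod k" k] k_pos
  unfolding rotate_registers_def by simp_all

lemma inj_on_rotate_registers: "inj_on rotate_registers {..<dim}"
proof (rule inj_onI)
  fix x y assume "x \<in> {..<dim}" "y \<in> {..<dim}" and eq: "rotate_registers x = rotate_registers y"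
  then have x: "x < dim" and y: "y < dim" by simp_all
  define low where "low v = v mod N + N * (v div N div k mod N ^ (m - 1))" for v
  have low: "low v mod N = v mod N" "low v div N = v div N div k mod N ^ (m - 1)" for v
    using N_pos by (simp_all add: low_def)
  have "x div N div k div N ^ (m - 1) = y div N div k div N ^ (m - 1)"
    "x div N mod k = y div N mod k" "low x = low y"
    using rotate_registers_parts[OF x] rotate_registers_parts[OF y] eq by (simp_all add: low_def)
  moreover from \<open>low x = low y\<close> have "x mod N = y mod N" "x div N div k mod N ^ (m - 1) = y div N div k mod N ^ (m - 1)"
    using low by metis+
  ultimately have "x div N div k = y div N div k"
    by (metis div_mult_mod_eq)
  then show "x = y"
    using \<open>x mod N = y mod N\<close> \<open>x div N mod k = y div N mod k\<close>
      mixed_radix_decompose[of x N k] mixed_radix_decompose[of y N k] by metis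
qed

definition prod_state :: "nat \<Rightarrow> (nat \<Rightarrow> complex) \<Rightarrow> (nat \<Rightarrow> nat \<Rightarrow> complex) \<Rightarrow> nat \<Rightarrow> complex" where
  "prod_state j \<phi> s x = (if x < dim \<and> x div N mod k = j
     then \<phi> (x mod N) * (\<Prod>t<m. s t (digit N t (x div N div k))) else 0)"

lemma prod_state_add_mult:
  assumes "a < N" "i < k" "w < N ^ m"
  shows "prod_state j \<phi> s (a + N * (i + k * w)) = (if i = j then \<phi> a * (\<Prod>t<m. s t (digit N t w)) else 0)"
  using assms by (simp add: prod_state_def mixed_radix_add_mult mixed_radix_less)

lemma prod_state_cong:
  "(\<And>a. a < N \<Longrightarrow> \<phi> a = \<phi>' a) \<Longrightarrow> (\<And>t. t < m \<Longrightarrow> s t = s' t) \<Longrightarrow> prod_state j \<phi> s = prod_state j \<phi>' s'"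
  unfolding prod_state_def using N_pos by (intro ext prod.cong refl if_cong) auto

lemma query_op_prod_state:
  "query_op (k * N) z (prod_state j \<phi> s) = prod_state j (\<lambda>a. complex_of_real (z (a + N * j)) * \<phi> a) s"
proof (rule ext)
  fix x
  have "x mod (k * N) = x mod N + N * (x div N mod k)"
    by (simp add: mult.commute[of k N] mod_mult2_eq)
  then show "query_op (k * N) z (prod_state j \<phi> s) x = prod_state j (\<lambda>a. complex_of_real (z (a + N * j)) * \<phi> a) s x"
    by (auto simp: query_op_def prod_state_def)
qed

lemma apply_block_diag_op_prod_state:
  "apply_op dim (block_diag_op N A) (prod_state j \<phi> s) = prod_state j (\<lambda>a. \<Sum>b<N. A a b * \<phi> b) s"
proof (rule ext)
  fix x
  show "apply_op dim (block_diag_op N A) (prod_state j \<phi> s) x = prod_state j (\<lambda>a. \<Sum>b<N. A a b * \<phi> b) s x"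
  proof (cases "x < dim")
    case True
    define P where "P = (\<Prod>t<m. s t (digit N t (x div N div k)))"
    have "x div N < k * N ^ m" using True N_pos by (simp add: div_less_iff_less_mult mult.commute)
    then have "A (x mod N) b * prod_state j \<phi> s (b + N * (x div N))
        = (if x div N mod k = j then A (x mod N) b * \<phi> b * P else 0)" if "b < N" for b
      using that add_mult_less_mult[OF that] by (simp add: prod_state_def P_def)
    then have "(\<Sum>b<N. A (x mod N) b * prod_state j \<phi> s (b + N * (x div N)))
        = (\<Sum>b<N. if x div N mod k = j then A (x mod N) b * \<phi> b * P else 0)"
      by (intro sum.cong) auto
    also have "\<dots> = (if x div N mod k = j then (\<Sum>b<N. A (x mod N) b * \<phi> b) * P else 0)"
      by (simp add: sum_distrib_right)
    finally show ?thesis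
      using True by (simp add: apply_op_block_diag_op[OF N_pos] prod_state_def P_def)
  qed (simp add: apply_op_def prod_state_def)
qed

lemma apply_shift_block_prod_state:
  assumes "j < k"
  shows "apply_op dim (perm_op shift_block) (prod_state (Suc j mod k) \<phi> s) = prod_state j \<phi> s"
proof -
  have "x div N mod k = j \<longleftrightarrow> Suc (x div N mod k) mod k = Suc j mod k" for x
    using assms k_pos by (simp add: Suc_mod_eq_iff)
  then show ?thesis
    using shift_block_less
    by (auto simp: apply_op_perm_op prod_state_def shift_block_parts intro!: ext)
qed

lemma apply_rotate_registers_prod_state:
  "apply_op dim (perm_op rotate_registers) (prod_state j \<phi> s) =
     prod_state j (s 0) (\<lambda>t. if Suc t < m then s (Suc t) else \<phi>)"
proof -
  obtain p where p: "m = Suc p" using m_pos by (cases m) auto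
  have "prod_state j \<phi> s (rotate_registers x) = prod_state j (s 0) (\<lambda>t. if Suc t < m then s (Suc t) else \<phi>) x"
    if x: "x < dim" for x
  proof -
    define w where "w = x div N div k"
    have w: "w < N ^ Suc p" using mixed_radix_high_less[OF x] p by (simp add: w_def)
    have "(\<Prod>t<m. s t (digit N t (x mod N + N * (w mod N ^ p))))
        = s 0 (x mod N) * (\<Prod>t<p. s (Suc t) (digit N t w))"
      unfolding p prod.lessThan_Suc_shift using N_pos
      by (simp add: digit_0_add_mult digit_Suc_add_mult digit_mod_power)
    moreover have "(\<Prod>t<m. (if Suc t < m then s (Suc t) else \<phi>) (digit N t w))
        = (\<Prod>t<p. s (Suc t) (digit N t w)) * \<phi> (w div N ^ p)"
      unfolding p using N_pos w by (simp add: digit_last)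
    moreover have "m - 1 = p" using p by simp
    ultimately show ?thesis
      using x rotate_registers_less[OF x] rotate_registers_parts[OF x]
      by (simp add: prod_state_def w_def mult_ac)
  qed
  then show ?thesis
    using rotate_registers_less by (auto simp: apply_op_perm_op prod_state_def intro!: ext)
qed

lemma prod_state_ket0: "prod_state 0 ket0 (\<lambda>_. ket0) = ket0"
proof (rule ext)
  fix x
  have "x = 0" if "x < dim" "x div N mod k = 0" "x mod N = 0" "\<forall>t<m. digit N t (x div N div k) = 0"
  proof -
    have "x div N div k = 0"
      using that N_pos by (intro digits_eq_0_imp_eq_0 mixed_radix_high_less) auto
    then show "x = 0"
      using that mixed_radix_decompose[of x N k] by simp
  qed
  moreover have "0 < dim" using N_pos k_pos by simp
  ultimately show "prod_state 0 ket0 (\<lambda>_. ket0) x = ket0 x"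
    by (auto simp: prod_state_def ket0_def prod_lessThan_if_zero digit_def)
qed

definition accepting :: "nat set" where
  "accepting = {x \<in> {..<dim}. \<exists>t<m. digit N t (x div N div k) = 0}"

lemma accepting_prob_prod_state:
  assumes j: "j < k" and \<psi>: "(\<Sum>a<N. (cmod (\<psi> a))\<^sup>2) = 1"
  shows "(\<Sum>x\<in>accepting. (cmod (prod_state j \<phi> (\<lambda>_. \<psi>) x))\<^sup>2)
    = (\<Sum>a<N. (cmod (\<phi> a))\<^sup>2) * (1 - (1 - (cmod (\<psi> 0))\<^sup>2) ^ m)"
proof -
  define g where "g a = (cmod (\<psi> a))\<^sup>2" for a
  define P where "P w = (if \<exists>t<m. digit N t w = 0 then \<Prod>t<m. g (digit N t w) else 0)" for w
  have "(cmod (prod_state j \<phi> (\<lambda>_. \<psi>) (a + N * (i + k * w))))\<^sup>2 = (if i = j then (cmod (\<phi> a))\<^sup>2 * (\<Prod>t<m. g (digit N t w)) else 0)"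
    if "a < N" "i < k" "w < N ^ m" for a i w
    using that by (simp add: prod_state_add_mult norm_mult power_mult_distrib prod_power_distrib g_def flip: prod_norm)
  then have "(\<Sum>x\<in>accepting. (cmod (prod_state j \<phi> (\<lambda>_. \<psi>) x))\<^sup>2)
      = (\<Sum>w<N ^ m. \<Sum>i<k. \<Sum>a<N. if i = j then P w * (cmod (\<phi> a))\<^sup>2 else 0)"
    unfolding accepting_def sum.inter_filter[OF finite_lessThan] sum_mixed_radix
    by (intro sum.cong refl) (auto simp: mixed_radix_add_mult P_def)
  also have "\<dots> = (\<Sum>w<N ^ m. \<Sum>i<k. if i = j then P w * (\<Sum>a<N. (cmod (\<phi> a))\<^sup>2) else 0)"
    by (intro sum.cong refl) (simp add: sum_distrib_left)
  also have "\<dots> = (\<Sum>w<N ^ m. P w) * (\<Sum>a<N. (cmod (\<phi> a))\<^sup>2)"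
    using j by (simp add: sum_distrib_right)
  also have "(\<Sum>w<N ^ m. P w) = 1 - (1 - g 0) ^ m"
    unfolding P_def using N_pos \<psi> by (intro sum_some_digit_zero) (simp_all add: g_def)
  finally show ?thesis by (simp add: g_def)
qed

lemma unitary_shift_block: "unitary_op dim (perm_op shift_block)"
  by (intro unitary_op_perm_op allI impI shift_block_less inj_on_shift_block)

lemma unitary_rotate_registers: "unitary_op dim (perm_op rotate_registers)"
  by (intro unitary_op_perm_op allI impI rotate_registers_less inj_on_rotate_registers)

definition uniform :: "nat \<Rightarrow> complex" where
  "uniform a = complex_of_real (1 / sqrt (real N))"

lemma sum_squares_uniform: "(\<Sum>a<N. (cmod (uniform a))\<^sup>2) = 1"
  using N_pos by (simp add: uniform_def power_divide norm_divide)

end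

section \<open>The algorithm\<close>

locale rorrelation_circuit = register_layout +
  fixes U :: "nat \<Rightarrow> nat \<Rightarrow> real"
  assumes orthogonal_U: "orthogonal_mat N U"
begin

definition walk_op :: "nat \<Rightarrow> nat \<Rightarrow> complex" where
  "walk_op = mult_op dim (perm_op shift_block) (block_diag_op N (\<lambda>a b. complex_of_real (U a b)))"

definition reflect_op :: "nat \<Rightarrow> nat \<Rightarrow> complex" where
  "reflect_op = block_diag_op N (\<lambda>a b. complex_of_real (uniform_reflection N a b))"

definition prepare_op :: "nat \<Rightarrow> nat \<Rightarrow> complex" where
  "prepare_op = mult_op dim (perm_op shift_block) reflect_op"

definition record_op :: "nat \<Rightarrow> nat \<Rightarrow> complex" where
  "record_op = mult_op dim prepare_op (mult_op dim (perm_op rotate_registers) reflect_op)"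

definition trial_ops :: "(nat \<Rightarrow> nat \<Rightarrow> complex) list" where
  "trial_ops = replicate (k - 1) walk_op @ [record_op]"

definition ops :: "(nat \<Rightarrow> nat \<Rightarrow> complex) list" where
  "ops = concat (replicate m trial_ops)"

lemma unitary_reflect_op: "unitary_op dim reflect_op"
  unfolding reflect_op_def
  by (intro unitary_op_block_diag_op N_pos unitary_op_of_orthogonal_mat orthogonal_mat_uniform_reflection)

lemma unitary_walk_op: "unitary_op dim walk_op"
  unfolding walk_op_def
  by (intro unitary_op_mult_op unitary_shift_block unitary_op_block_diag_op N_pos
      unitary_op_of_orthogonal_mat orthogonal_U)

lemma unitary_prepare_op: "unitary_op dim prepare_op"
  unfolding prepare_op_def by (intro unitary_op_mult_op unitary_shift_block unitary_reflect_op)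

lemma unitary_record_op: "unitary_op dim record_op"
  unfolding record_op_def
  by (intro unitary_op_mult_op unitary_prepare_op unitary_rotate_registers unitary_reflect_op)

lemma query_algorithm_ops: "query_algorithm (k * N) (N ^ m) prepare_op ops accepting"
proof -
  have "V \<in> set ops \<Longrightarrow> V = walk_op \<or> V = record_op" for V
    by (auto simp: ops_def trial_ops_def split: if_splits)
  then show ?thesis
    using N_pos unitary_prepare_op unitary_walk_op unitary_record_op
    by (auto simp: query_algorithm_def accepting_def mult_ac)
qed

lemma length_ops: "length ops = m * k"
  using k_pos by (simp add: ops_def trial_ops_def length_concat sum_list_replicate)

lemma apply_prepare_op: "apply_op dim prepare_op (prod_state 0 ket0 s) = prod_state (k - 1) uniform s"
proof -
  have "prod_state 0 (\<lambda>a. \<Sum>b<N. complex_of_real (uniform_reflection N a b) * ket0 b) s = prod_state 0 uniform s"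
    using N_pos by (intro prod_state_cong) (simp_all add: sum_mult_ket0 uniform_def uniform_reflection_col_0)
  moreover have "apply_op dim (perm_op shift_block) (prod_state 0 uniform s) = prod_state (k - 1) uniform s"
    using apply_shift_block_prod_state[of "k - 1"] k_pos by simp
  ultimately show ?thesis
    unfolding prepare_op_def reflect_op_def apply_op_mult_op apply_block_diag_op_prod_state by simp
qed

text \<open>After \<open>i\<close> walk steps the query register holds the chain vector of the last \<open>i\<close> blocks
  of \<open>z\<close>.\<close>
definition chain_amp :: "(nat \<Rightarrow> real) \<Rightarrow> nat \<Rightarrow> nat \<Rightarrow> complex" where
  "chain_amp z i a = complex_of_real (chain_vector N U i (\<lambda>x. z (x + (k - i) * N)) a)"

definition trial_amp :: "(nat \<Rightarrow> real) \<Rightarrow> nat \<Rightarrow> real" where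
  "trial_amp z a = (\<Sum>b<N. uniform_reflection N a b * (z b * chain_vector N U (k - 1) (\<lambda>x. z (x + N)) b))"

definition workspace :: "(nat \<Rightarrow> real) \<Rightarrow> nat \<Rightarrow> nat \<Rightarrow> nat \<Rightarrow> complex" where
  "workspace z r t = (if t < m - r then ket0 else (\<lambda>a. complex_of_real (trial_amp z a)))"

lemma run_walk_op:
  assumes "Suc i < k"
  shows "run_alg dim (k * N) z [walk_op] (prod_state (k - 1 - i) (chain_amp z i) s)
    = prod_state (k - 1 - Suc i) (chain_amp z (Suc i)) s"
proof -
  have "k - i = Suc (k - Suc i)" using assms by simp
  then have "(\<lambda>x. z (x + (N + (k - Suc i) * N))) = (\<lambda>x. z (x + (k - i) * N))"
    by (simp add: fun_eq_iff)
  then have amp: "(\<lambda>a. \<Sum>b<N. complex_of_real (U a b) * (complex_of_real (z (b + N * (k - 1 - i))) * chain_amp z i b))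
      = chain_amp z (Suc i)"
    unfolding chain_amp_def by (simp add: add.assoc mult.commute[of N])
  have shift: "apply_op dim (perm_op shift_block) (prod_state (k - 1 - i) \<phi> s) = prod_state (k - 1 - Suc i) \<phi> s" for \<phi>
    using apply_shift_block_prod_state[of "k - 1 - Suc i"] assms by (simp add: Suc_diff_Suc)
  show ?thesis
    unfolding run_alg.simps walk_op_def apply_op_mult_op query_op_prod_state apply_block_diag_op_prod_state
      amp shift ..
qed

lemma run_walk_ops:
  "i \<le> k - 1 \<Longrightarrow> run_alg dim (k * N) z (replicate i walk_op) (prod_state (k - 1) uniform s)
    = prod_state (k - 1 - i) (chain_amp z i) s"
proof (induction i)
  case 0
  have "chain_amp z 0 = uniform" by (simp add: chain_amp_def uniform_def fun_eq_iff)
  then show ?case by simp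
next
  case (Suc i)
  then show ?case
    using run_walk_op[of i] by (simp add: replicate_append_same[symmetric] run_alg_append del: replicate_append_same)
qed

lemma run_record_op:
  assumes "s 0 = ket0"
  shows "run_alg dim (k * N) z [record_op] (prod_state 0 (chain_amp z (k - 1)) s)
    = prod_state (k - 1) uniform (\<lambda>t. if Suc t < m then s (Suc t) else (\<lambda>a. complex_of_real (trial_amp z a)))"
proof -
  have "k - (k - 1) = 1" using k_pos by simp
  then have amp: "(\<lambda>a. \<Sum>b<N. complex_of_real (uniform_reflection N a b) * (complex_of_real (z (b + N * 0)) * chain_amp z (k - 1) b))
      = (\<lambda>a. complex_of_real (trial_amp z a))"
    by (simp add: chain_amp_def trial_amp_def fun_eq_iff)
  have "run_alg dim (k * N) z [record_op] (prod_state 0 (chain_amp z (k - 1)) s)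
      = apply_op dim prepare_op (apply_op dim (perm_op rotate_registers)
          (prod_state 0 (\<lambda>a. complex_of_real (trial_amp z a)) s))"
    unfolding run_alg.simps record_op_def apply_op_mult_op query_op_prod_state
    unfolding reflect_op_def apply_block_diag_op_prod_state amp ..
  also have "\<dots> = prod_state (k - 1) uniform (\<lambda>t. if Suc t < m then s (Suc t) else (\<lambda>a. complex_of_real (trial_amp z a)))"
    unfolding apply_rotate_registers_prod_state assms by (rule apply_prepare_op)
  finally show ?thesis .
qed

lemma run_trial_ops:
  assumes "r < m"
  shows "run_alg dim (k * N) z trial_ops (prod_state (k - 1) uniform (workspace z r))
    = prod_state (k - 1) uniform (workspace z (Suc r))"
proof -
  have "workspace z r 0 = ket0" using assms by (simp add: workspace_def)
  moreover have "(\<lambda>t. if Suc t < m then workspace z r (Suc t) else (\<lambda>a. complex_of_real (trial_amp z a)))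
      = workspace z (Suc r)"
    by (auto simp: workspace_def fun_eq_iff)
  ultimately show ?thesis
    using run_record_op[of "workspace z r" z] run_walk_ops[of "k - 1" z "workspace z r"]
    by (simp add: trial_ops_def run_alg_append)
qed

lemma run_trials:
  "r \<le> m \<Longrightarrow> run_alg dim (k * N) z (concat (replicate r trial_ops)) (prod_state (k - 1) uniform (workspace z 0))
    = prod_state (k - 1) uniform (workspace z r)"
proof (induction r)
  case (Suc r)
  then show ?case
    using run_trial_ops[of r z]
    by (simp add: replicate_append_same[symmetric] run_alg_append del: replicate_append_same)
qed simp

lemma final_state_ops:
  "final_state (k * N) (N ^ m) prepare_op ops z = prod_state (k - 1) uniform (\<lambda>_ a. complex_of_real (trial_amp z a))"
proof -
  have "prod_state (k - 1) uniform (\<lambda>_. ket0) = prod_state (k - 1) uniform (workspace z 0)"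
    by (rule prod_state_cong) (simp_all add: workspace_def)
  then have "apply_op dim prepare_op ket0 = prod_state (k - 1) uniform (workspace z 0)"
    using apply_prepare_op[of "\<lambda>_. ket0"] by (simp add: prod_state_ket0)
  moreover have "workspace z m = (\<lambda>_ a. complex_of_real (trial_amp z a))"
    by (simp add: workspace_def fun_eq_iff)
  ultimately show ?thesis
    using run_trials[of m z] by (simp add: final_state_def ops_def mult_ac flip: ket0_def)
qed

lemma trial_amp_0: "trial_amp z 0 = rorrelation k N U z"
proof -
  have "trial_amp z 0 = (\<Sum>b<N. 1 / sqrt (real N) * (z b * chain_vector N U (k - 1) (\<lambda>x. z (x + N)) b))"
    unfolding trial_amp_def using N_pos
    by (intro sum.cong refl) (simp add: uniform_reflection_sym[of N 0] uniform_reflection_col_0)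
  also have "\<dots> = rorrelation (Suc (k - 1)) N U z"
    by (rule rorrelation_Suc[OF N_pos, symmetric])
  finally show ?thesis using k_pos by simp
qed

lemma sum_squares_trial_amp:
  assumes z: "\<forall>i < k * N. z i \<in> {-1, 1}"
  shows "(\<Sum>a<N. (trial_amp z a)\<^sup>2) = 1"
proof -
  have "(\<Sum>a<N. (trial_amp z a)\<^sup>2) = (\<Sum>b<N. (z b * chain_vector N U (k - 1) (\<lambda>x. z (x + N)) b)\<^sup>2)"
    unfolding trial_amp_def by (rule orthogonal_mat_sum_squares[OF orthogonal_mat_uniform_reflection])
  also have "\<dots> = (\<Sum>b<N. (chain_vector N U (k - 1) (\<lambda>x. z (x + N)) b)\<^sup>2)"
  proof (intro sum.cong refl)
    fix b assume "b \<in> {..<N}"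
    then have "b < k * N" using k_pos by (simp add: less_le_trans[of b N])
    then have "(z b)\<^sup>2 = 1" using z by auto
    then show "(z b * chain_vector N U (k - 1) (\<lambda>x. z (x + N)) b)\<^sup>2 = (chain_vector N U (k - 1) (\<lambda>x. z (x + N)) b)\<^sup>2"
      by (simp add: power_mult_distrib)
  qed
  also have "\<dots> = 1"
  proof (rule sum_squares_chain_vector[OF N_pos orthogonal_U])
    have "i + N < k * N" if "i < (k - 1) * N" for i
      using that k_pos by (metis add.commute add_less_cancel_left mult_eq_if not_gr0)
    then show "\<forall>i<(k - 1) * N. z (i + N) \<in> {-1, 1}" using z by blast
  qed
  finally show ?thesis .
qed

lemma rorrelation_squared_le_1:
  assumes "\<forall>i < k * N. z i \<in> {-1, 1}"
  shows "(rorrelation k N U z)\<^sup>2 \<le> 1"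
proof -
  have "(trial_amp z 0)\<^sup>2 \<le> (\<Sum>a<N. (trial_amp z a)\<^sup>2)"
    using N_pos by (intro member_le_sum) auto
  then show ?thesis using sum_squares_trial_amp[OF assms] by (simp add: trial_amp_0)
qed

lemma accept_prob_ops:
  assumes "\<forall>i < k * N. z i \<in> {-1, 1}"
  shows "accept_prob (k * N) (N ^ m) prepare_op ops accepting z = 1 - (1 - (rorrelation k N U z)\<^sup>2) ^ m"
  using accepting_prob_prod_state[of "k - 1" "\<lambda>a. complex_of_real (trial_amp z a)" uniform]
    k_pos sum_squares_trial_amp[OF assms]
  by (simp add: accept_prob_def final_state_ops sum_squares_uniform trial_amp_0)

end

section \<open>Amplification by repetition\<close>

lemma exp_neg_five_quarters_le: "exp (- 5 / 4 :: real) \<le> 1 / 3"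
proof -
  have "(5 / 4 :: real) ^ 5 \<le> exp (1 / 4) ^ 5"
    using exp_ge_add_one_self[of "1 / 4 :: real"] by (intro power_mono) auto
  also have "\<dots> = exp (5 / 4)"
    by (simp flip: exp_of_nat_mult)
  finally have "3 \<le> exp (5 / 4 :: real)"
    by (simp add: power_divide)
  then show ?thesis by (simp add: exp_minus field_simps)
qed

lemma one_minus_power_ge_two_thirds:
  fixes p :: real
  assumes "p \<le> 1" and "5 / 4 \<le> n * p"
  shows "2 / 3 \<le> 1 - (1 - p) ^ n"
proof -
  have "0 < n" using assms(2) by (cases n) auto
  moreover have "real n * p \<le> real n" using assms(1) by (simp add: mult_left_le)
  ultimately have "(1 - p) ^ n \<le> exp (- (n * p))"
    using exp_ge_one_minus_x_over_n_power_n[of "n * p" n] by simp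
  also have "\<dots> \<le> exp (- 5 / 4)" using assms(2) by simp
  also have "\<dots> \<le> 1 / 3" by (rule exp_neg_five_quarters_le)
  finally show ?thesis by simp
qed

lemma one_minus_power_le_mult: "(p::real) \<le> 1 \<Longrightarrow> 1 - (1 - p) ^ n \<le> n * p"
  using Bernoulli_inequality[of "- p" n] by simp

lemma four_power_pred: "1 \<le> k \<Longrightarrow> (4::real) ^ k = 4 * 4 ^ (k - 1)"
  by (simp flip: power_Suc)

lemma inverse_two_power_squared: "(1 / 2 ^ k)\<^sup>2 = 1 / (4::real) ^ k"
proof -
  have "(2::real) ^ k * 2 ^ k = 4 ^ k" by (simp flip: power_mult_distrib)
  then show ?thesis by (simp add: power2_eq_square)
qed

lemma repeated_trials_accept:
  fixes \<phi> :: real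
  assumes "1 \<le> k" "1 / 2 ^ k \<le> \<phi>" "\<phi>\<^sup>2 \<le> 1"
  shows "2 / 3 \<le> 1 - (1 - \<phi>\<^sup>2) ^ (5 * 4 ^ (k - 1))"
proof (rule one_minus_power_ge_two_thirds[OF assms(3)])
  have "(1 / 2 ^ k)\<^sup>2 \<le> \<phi>\<^sup>2"
    using assms(2) by (intro power_mono) auto
  then have "1 / 4 ^ k \<le> \<phi>\<^sup>2"
    by (simp only: inverse_two_power_squared)
  then show "5 / 4 \<le> real (5 * 4 ^ (k - 1)) * \<phi>\<^sup>2"
    using four_power_pred[OF assms(1)] by (simp add: field_simps)
qed

lemma repeated_trials_reject:
  fixes \<phi> :: real
  assumes "1 \<le> k" "\<bar>\<phi>\<bar> \<le> 1 / 2 * (1 / 2 ^ k)"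
  shows "1 - (1 - \<phi>\<^sup>2) ^ (5 * 4 ^ (k - 1)) \<le> 1 / 3"
proof -
  define c :: real where "c = 4 ^ (k - 1)"
  have c: "1 \<le> c" by (simp add: c_def)
  have "\<phi>\<^sup>2 = \<bar>\<phi>\<bar>\<^sup>2" by simp
  also have "\<dots> \<le> (1 / 2 * (1 / 2 ^ k))\<^sup>2"
    using assms(2) by (intro power_mono) auto
  also have "\<dots> = 1 / 4 * (1 / 2 ^ k)\<^sup>2"
    by (simp add: power_divide power_mult_distrib)
  also have "\<dots> = 1 / (16 * c)"
    unfolding inverse_two_power_squared four_power_pred[OF assms(1)] c_def by simp
  finally have sq: "\<phi>\<^sup>2 \<le> 1 / (16 * c)" .
  have "real (5 * 4 ^ (k - 1)) * \<phi>\<^sup>2 = 5 * c * \<phi>\<^sup>2" by (simp add: c_def)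
  also have "\<dots> \<le> 5 * c * (1 / (16 * c))"
    using sq c by (intro mult_left_mono) auto
  also have "\<dots> = 5 / 16" using c by simp
  finally have "real (5 * 4 ^ (k - 1)) * \<phi>\<^sup>2 \<le> 5 / 16" .
  moreover have "1 / (16 * c) \<le> 1" using c by simp
  ultimately show ?thesis
    using sq one_minus_power_le_mult[of "\<phi>\<^sup>2" "5 * 4 ^ (k - 1)"] by linarith
qed

lemma rorrelation_algorithm:
  assumes k: "1 \<le> k" and N: "0 < N" and U: "orthogonal_mat N U"
  shows "\<exists>W V0 Vs A. query_algorithm (k * N) W V0 Vs A
    \<and> real (length Vs) \<le> 2 * real k * 4 ^ k
    \<and> (\<forall>z. (\<forall>i < k * N. z i \<in> {-1, 1}) \<longrightarrow>
          (1 / 2 ^ k \<le> rorrelation k N U z \<longrightarrow> 2 / 3 \<le> accept_prob (k * N) W V0 Vs A z)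
        \<and> (\<bar>rorrelation k N U z\<bar> \<le> 1 / 2 * (1 / 2 ^ k) \<longrightarrow> accept_prob (k * N) W V0 Vs A z \<le> 1 / 3))"
proof -
  define m :: nat where "m = 5 * 4 ^ (k - 1)"
  interpret rorrelation_circuit N k m U
    using assms by unfold_locales (simp_all add: m_def)
  have "real (length ops) \<le> 2 * real k * 4 ^ k"
    using four_power_pred[OF k] by (simp add: length_ops) (simp add: m_def)
  moreover have "2 / 3 \<le> accept_prob (k * N) (N ^ m) prepare_op ops accepting z"
    if "\<forall>i < k * N. z i \<in> {-1, 1}" "1 / 2 ^ k \<le> rorrelation k N U z" for z
    unfolding accept_prob_ops[OF that(1)] unfolding m_def
    by (rule repeated_trials_accept[OF k that(2) rorrelation_squared_le_1[OF that(1)]])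
  moreover have "accept_prob (k * N) (N ^ m) prepare_op ops accepting z \<le> 1 / 3"
    if "\<forall>i < k * N. z i \<in> {-1, 1}" "\<bar>rorrelation k N U z\<bar> \<le> 1 / 2 * (1 / 2 ^ k)" for z
    unfolding accept_prob_ops[OF that(1)] unfolding m_def
    by (rule repeated_trials_reject[OF k that(2)])
  ultimately show ?thesis
    using query_algorithm_ops by blast
qed

theorem mainTheorem2:
  shows "\<exists>C::real. \<forall>(k::nat) (n::nat) (U::nat \<Rightarrow> nat \<Rightarrow> real).
     k \<ge> 1 \<longrightarrow> orthogonal_mat (2 ^ n) U \<longrightarrow>
     (\<exists>W V0 Vs A. query_algorithm (k * 2 ^ n) W V0 Vs A
        \<and> real (length Vs) \<le> C * real k * 4 ^ k
        \<and> (\<forall>z::nat \<Rightarrow> real. (\<forall>i < k * 2 ^ n. z i \<in> {-1, 1}) \<longrightarrow>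
              (rorrelation k (2 ^ n) U z \<ge> 1 / 2 ^ k \<longrightarrow>
                 accept_prob (k * 2 ^ n) W V0 Vs A z \<ge> 2 / 3)
            \<and> (\<bar>rorrelation k (2 ^ n) U z\<bar> \<le> (1 / 2) * (1 / 2 ^ k) \<longrightarrow>
                 accept_prob (k * 2 ^ n) W V0 Vs A z \<le> 1 / 3)))"
  by (rule exI[of _ 2], intro allI impI rorrelation_algorithm) simp_all

end
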